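(* Let $n,k$ be positive integers with $n \geq 3(n-k)$ and $n\geq k$, and let $C\in\mathcal{K}_k(n)$. Then there is no chord $c$ of $C$ such that both $s_c$ and $e_c$ lie in $M_{n,k}=\{k+1,k+2,\dots,2n-k\}$.
   Context: A linear chord diagram of size $n$ is a partition of $\{1,2,\dots,2n\}$ into blocks of size two, called chords. For a chord $c=\{s_c,e_c\}$ with $s_c<e_c$, $s_c$ is its start point, $e_c$ its end point, and its length is $e_c-s_c$. $\mathcal{K}_k(n)$ is the set of all linear chord diagrams of size $n$ in which every chord has length at least $k$. *)

theory Defs
  imports Main
begin

definition linear_chord_diagram :: "nat \<Rightarrow> nat set set \<Rightarrow> bool" where
  "linear_chord_diagram n C \<longleftrightarrow>
     (\<forall>c\<in>C. card c = 2) \<and>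
     (\<forall>c\<in>C. \<forall>d\<in>C. c \<noteq> d \<longrightarrow> c \<inter> d = {}) \<and>
     \<Union>C = {1..2*n}"

definition start_point :: "nat set \<Rightarrow> nat" where
  "start_point c = Min c"

definition end_point :: "nat set \<Rightarrow> nat" where
  "end_point c = Max c"

definition chord_length :: "nat set \<Rightarrow> nat" where
  "chord_length c = end_point c - start_point c"

definition K :: "nat \<Rightarrow> nat \<Rightarrow> nat set set set" where
  "K k n = {C. linear_chord_diagram n C \<and> (\<forall>c\<in>C. chord_length c \<ge> k)}"

definition M :: "nat \<Rightarrow> nat \<Rightarrow> nat set" where
  "M n k = {k+1..2*n-k}"

end

theory Submission
  imports Defs
begin

text \<open>The window \<open>M n k\<close> has diameter \<open>2n - 2k - 1\<close>, and the hypothesis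
  \<open>n \<ge> 3(n - k)\<close> says exactly \<open>2n \<le> 3k\<close>, so the diameter is below \<open>k\<close>:
  no chord of length at least \<open>k\<close> fits inside it.\<close>

lemma M_diameter_less:
  assumes "2 * n \<le> 3 * k" and "i \<in> M n k" and "j \<in> M n k"
  shows "j - i < k"
  using assms by (auto simp: M_def)

lemma chord_length_ge_of_K:
  assumes "C \<in> K k n" and "c \<in> C"
  shows "k \<le> end_point c - start_point c"
  using assms by (auto simp: K_def chord_length_def)

theorem lemma1:
  fixes n k :: nat and C :: "nat set set"
  assumes "n > 0" and "k > 0" and "n \<ge> k" and "n \<ge> 3 * (n - k)"
    and "C \<in> K k n"
  shows "\<not> (\<exists>c\<in>C. start_point c \<in> M n k \<and> end_point c \<in> M n k)"
proof
  assume "\<exists>c\<in>C. start_point c \<in> M n k \<and> end_point c \<in> M n k"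
  then obtain c where "c \<in> C" and ends: "start_point c \<in> M n k" "end_point c \<in> M n k"
    by blast
  have "2 * n \<le> 3 * k" using \<open>n \<ge> 3 * (n - k)\<close> \<open>n \<ge> k\<close> by linarith
  then have "end_point c - start_point c < k" using ends by (rule M_diameter_less)
  with chord_length_ge_of_K[OF \<open>C \<in> K k n\<close> \<open>c \<in> C\<close>] show False by simp
qed

end
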